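(* Let $X$ be a finitely triangulable space (with a metric inducing its topology), let $k\ge0$, and let $A\subseteq C(X,[0,1]^n)$ be a family of continuous functions that is uniformly Lipschitz and closed (with respect to the supremum norm). Then the image $\{[H_k(f)]: f\in A\}$ of $A$ in $\mathcal{Q}_n$ is compact.
   Context: Fix a field $\mathbb{k}$. For continuous $f:X\to\mathbb{R}^n$, $H_k(f)$ is the $n$-parameter persistence module $s\mapsto H_k(\{x\in X:f(x)\ll s\};\mathbb{k})$ (singular homology, maps induced by inclusion), where $s\ll t$ means $s_i<t_i$ for all $i$. An $n$-parameter persistence module is a functor $\mathbf{R}^n\to\mathbf{Vect}_{\mathbb{k}}$ ($\mathbf{R}^n$ with componentwise order); it is q-tame if $V_{s,t}$ has finite rank whenever $s\ll t$ and ephemeral if $V_{s,t}=0$ whenever $s\ll t$. The observable category is the Serre quotient of persistence modules by ephemeral ones. $\mathcal{Q}_n$ is the set of isomorphism classes of q-tame objects of the observable category, endowed with the interleaving distance $d_I$ (infimum of $\varepsilon\ge0$ admitting morphisms $f:V\to W[\varepsilon]$, $g:W\to V[\varepsilon]$ whose composites $g[\varepsilon]f$, $f[\varepsilon]g$ are the structure-map morphisms to the $2\varepsilon$-shifts, where $V[\varepsilon]_s=V_{s+\varepsilon}$ with $s+\varepsilon$ adding $\varepsilon$ to each coordinate). *)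

theory Defs
  imports "HOL-Homology.Homology" "HOL-Analysis.Analysis"
begin

definition fchain :: "nat \<Rightarrow> 'a topology \<Rightarrow> (((nat \<Rightarrow> real) \<Rightarrow> 'a) \<Rightarrow> 'k::field) \<Rightarrow> bool" where
  "fchain p T c \<longleftrightarrow> finite {\<sigma>. c \<sigma> \<noteq> 0} \<and> (\<forall>\<sigma>. c \<sigma> \<noteq> 0 \<longrightarrow> singular_simplex p T \<sigma>)"

definition fboundary :: "nat \<Rightarrow> (((nat \<Rightarrow> real) \<Rightarrow> 'a) \<Rightarrow> 'k::field)
                           \<Rightarrow> (((nat \<Rightarrow> real) \<Rightarrow> 'a) \<Rightarrow> 'k)" where
  "fboundary p c =
     (if p = 0 then (\<lambda>\<tau>. 0)
      else (\<lambda>\<tau>. \<Sum>\<sigma>\<in>{\<sigma>. c \<sigma> \<noteq> 0}.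
                  c \<sigma> * (\<Sum>i\<in>{i. i \<le> p \<and> singular_face p i \<sigma> = \<tau>}. (-1) ^ i)))"

definition fcycles :: "nat \<Rightarrow> 'a topology \<Rightarrow> ((((nat \<Rightarrow> real) \<Rightarrow> 'a) \<Rightarrow> 'k::field) set)" where
  "fcycles p T = {c. fchain p T c \<and> fboundary p c = (\<lambda>\<tau>. 0)}"

definition fboundaries :: "nat \<Rightarrow> 'a topology \<Rightarrow> ((((nat \<Rightarrow> real) \<Rightarrow> 'a) \<Rightarrow> 'k::field) set)" where
  "fboundaries p T = {fboundary (Suc p) d | d. fchain (Suc p) T d}"

text \<open>H_p(T;'k) is the quotient fcycles p T / fboundaries p T.\<close>

text \<open>A pair (Z,B) of families of subspaces indexed by R^n (here real^'n) represents the
persistence module s \<mapsto> Z s / B s, with structure maps induced by the identity on chains.\<close>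

type_synonym ('n, 'c) qpmod = "(real^'n \<Rightarrow> 'c set) \<times> (real^'n \<Rightarrow> 'c set)"

definition shift :: "real^'n \<Rightarrow> real \<Rightarrow> real^'n" where
  "shift s e = (\<chi> i. s $ i + e)"

definition lin_on :: "('b \<Rightarrow> 'k::field) set \<Rightarrow> (('b \<Rightarrow> 'k) \<Rightarrow> ('b \<Rightarrow> 'k)) \<Rightarrow> bool" where
  "lin_on Z F \<longleftrightarrow>
     (\<forall>x\<in>Z. \<forall>y\<in>Z. F (\<lambda>\<sigma>. x \<sigma> + y \<sigma>) = (\<lambda>\<sigma>. F x \<sigma> + F y \<sigma>)) \<and>
     (\<forall>a. \<forall>x\<in>Z. F (\<lambda>\<sigma>. a * x \<sigma>) = (\<lambda>\<sigma>. a * F x \<sigma>))"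

text \<open>A morphism V \<rightarrow> W[e] between such quotient modules: for every s a linear map on
cycle representatives sending Z_V(s) into Z_W(s+e) and B_V(s) into B_W(s+e) (so it induces
a linear map on the quotients), natural modulo boundaries. Every linear map between the
quotients arises this way (lifting over a field).\<close>

definition qmorph :: "real \<Rightarrow> ('n::finite, 'b \<Rightarrow> 'k::field) qpmod \<Rightarrow> ('n, 'b \<Rightarrow> 'k) qpmod
                      \<Rightarrow> (real^'n \<Rightarrow> ('b \<Rightarrow> 'k) \<Rightarrow> ('b \<Rightarrow> 'k)) \<Rightarrow> bool" where
  "qmorph e V W F \<longleftrightarrow>
     (\<forall>s. lin_on (fst V s) (F s)
        \<and> F s ` fst V s \<subseteq> fst W (shift s e)
        \<and> F s ` snd V s \<subseteq> snd W (shift s e)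
        \<and> (\<forall>t. (\<forall>i. s $ i \<le> t $ i) \<longrightarrow>
               (\<forall>z\<in>fst V s. (\<lambda>\<sigma>. F t z \<sigma> - F s z \<sigma>) \<in> snd W (shift t e))))"

text \<open>The composite G[e] \<circ> F equals the structure morphism V \<rightarrow> V[2e].\<close>

definition qcomp_is_shift :: "real \<Rightarrow> ('n::finite, 'b \<Rightarrow> 'k::field) qpmod
                      \<Rightarrow> (real^'n \<Rightarrow> ('b \<Rightarrow> 'k) \<Rightarrow> ('b \<Rightarrow> 'k))
                      \<Rightarrow> (real^'n \<Rightarrow> ('b \<Rightarrow> 'k) \<Rightarrow> ('b \<Rightarrow> 'k)) \<Rightarrow> bool" where
  "qcomp_is_shift e V F G \<longleftrightarrow>
     (\<forall>s. \<forall>z\<in>fst V s. (\<lambda>\<sigma>. G (shift s e) (F s z) \<sigma> - z \<sigma>) \<in> snd V (shift s (2 * e)))"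

definition interleaved :: "real \<Rightarrow> ('n::finite, 'b \<Rightarrow> 'k::field) qpmod \<Rightarrow> ('n, 'b \<Rightarrow> 'k) qpmod \<Rightarrow> bool" where
  "interleaved e V W \<longleftrightarrow>
     (\<exists>F G. qmorph e V W F \<and> qmorph e W V G \<and> qcomp_is_shift e V F G \<and> qcomp_is_shift e W G F)"

text \<open>Interleaving distance (extended; infimum of the empty set is \<infinity>).\<close>

definition interleaving_dist :: "('n::finite, 'b \<Rightarrow> 'k::field) qpmod \<Rightarrow> ('n, 'b \<Rightarrow> 'k) qpmod \<Rightarrow> ereal" where
  "interleaving_dist V W = Inf {ereal e | e. 0 \<le> e \<and> interleaved e V W}"

definition sublevel :: "'a set \<Rightarrow> ('a \<Rightarrow> real^'n) \<Rightarrow> real^'n \<Rightarrow> 'a set" where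
  "sublevel X f s = {x \<in> X. \<forall>i. f x $ i < s $ i}"

definition Hmod :: "'k::field itself \<Rightarrow> nat \<Rightarrow> 'a::topological_space set \<Rightarrow> ('a \<Rightarrow> real^'n::finite)
                    \<Rightarrow> ('n, ((nat \<Rightarrow> real) \<Rightarrow> 'a) \<Rightarrow> 'k) qpmod" where
  "Hmod K k X f = ((\<lambda>s. fcycles k (top_of_set (sublevel X f s))),
                   (\<lambda>s. fboundaries k (top_of_set (sublevel X f s))))"

definition Hdist :: "'k::field itself \<Rightarrow> nat \<Rightarrow> 'a::topological_space set \<Rightarrow> ('a \<Rightarrow> real^'n::finite)
                     \<Rightarrow> ('a \<Rightarrow> real^'n) \<Rightarrow> ereal" where
  "Hdist K k X f g = interleaving_dist (Hmod K k X f) (Hmod K k X g)"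

definition popen :: "('x \<Rightarrow> 'x \<Rightarrow> ereal) \<Rightarrow> 'x set \<Rightarrow> bool" where
  "popen \<rho> U \<longleftrightarrow> (\<forall>x\<in>U. \<exists>e>0. \<forall>y. \<rho> x y < ereal e \<longrightarrow> y \<in> U)"

definition pcompact :: "('x \<Rightarrow> 'x \<Rightarrow> ereal) \<Rightarrow> 'x set \<Rightarrow> bool" where
  "pcompact \<rho> K \<longleftrightarrow>
     (\<forall>\<U>. (\<forall>U\<in>\<U>. popen \<rho> U) \<and> K \<subseteq> \<Union>\<U> \<longrightarrow> (\<exists>\<V>\<subseteq>\<U>. finite \<V> \<and> K \<subseteq> \<Union>\<V>))"

end

theory Submission
  imports Defs "HOL-Complex_Analysis.Great_Picard"
begin

text \<open>If \<open>|f - g| \<le> e\<close> componentwise, the sublevel filtrations of \<open>f\<close> and \<open>g\<close> are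
\<open>e\<close>-interleaved by inclusions, so \<open>d\<^sub>I(H\<^sub>k f, H\<^sub>k g) \<le> \<parallel>f - g\<parallel>\<^sub>\<infinity>\<close>: the map \<open>f \<mapsto> [H\<^sub>k f]\<close>
is continuous for the topology of uniform convergence. Since \<open>X\<close> is compact (being homeomorphic
to a finite polyhedron), Arzela-Ascoli makes the bounded, uniformly Lipschitz, closed family
\<open>A\<close> compact in that topology, and its image is therefore compact.\<close>

lemma fchain_mono: "fchain p (top_of_set S) c \<Longrightarrow> S \<subseteq> T \<Longrightarrow> fchain p (top_of_set T) c"
  unfolding fchain_def using singular_simplex_mono by blast

lemma fcycles_mono: "S \<subseteq> T \<Longrightarrow> fcycles p (top_of_set S) \<subseteq> fcycles p (top_of_set T)"
  unfolding fcycles_def using fchain_mono by blast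

lemma fboundaries_mono: "S \<subseteq> T \<Longrightarrow> fboundaries p (top_of_set S) \<subseteq> fboundaries p (top_of_set T)"
  unfolding fboundaries_def using fchain_mono by blast

lemma zero_in_fboundaries: "(\<lambda>\<sigma>. 0::'k::field) \<in> fboundaries p (T::'a topology)"
proof -
  have "fchain (Suc p) T (\<lambda>\<sigma>. 0::'k)"
    and "fboundary (Suc p) (\<lambda>\<sigma>::(nat \<Rightarrow> real) \<Rightarrow> 'a. 0::'k) = (\<lambda>\<sigma>. 0)"
    by (simp_all add: fchain_def fboundary_def)
  then show ?thesis unfolding fboundaries_def by force
qed

lemma sublevel_subset_shift:
  assumes "\<forall>x\<in>X. \<forall>i. g x $ i \<le> f x $ i + e"
  shows "sublevel X f s \<subseteq> sublevel X g (shift s e)"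
  using assms unfolding sublevel_def shift_def by (fastforce intro: order.strict_trans1)

lemma qmorph_inclusion_Hmod:
  assumes "\<And>s. sublevel X f s \<subseteq> sublevel X g (shift s e)"
  shows "qmorph e (Hmod K k X f) (Hmod K k X g) (\<lambda>s z. z)"
  using fcycles_mono[OF assms] fboundaries_mono[OF assms]
  by (simp add: qmorph_def Hmod_def lin_on_def zero_in_fboundaries image_subset_iff subset_iff)
    blast

lemma interleaved_Hmod_if_sublevel_shifts:
  assumes "\<And>s. sublevel X f s \<subseteq> sublevel X g (shift s e)"
    and "\<And>s. sublevel X g s \<subseteq> sublevel X f (shift s e)"
  shows "interleaved e (Hmod K k X f) (Hmod K k X g)"
  unfolding interleaved_def
  by (intro exI[of _ "\<lambda>s z. z"] conjI qmorph_inclusion_Hmod assms)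
    (auto simp: qcomp_is_shift_def Hmod_def zero_in_fboundaries)

lemma Hdist_le_componentwise:
  assumes "0 \<le> e" and "\<forall>x\<in>X. \<forall>i. \<bar>f x $ i - g x $ i\<bar> \<le> e"
  shows "Hdist K k X f g \<le> ereal e"
proof -
  have "interleaved e (Hmod K k X f) (Hmod K k X g)"
    using assms(2) by (intro interleaved_Hmod_if_sublevel_shifts sublevel_subset_shift)
      (smt (verit, best))+
  then show ?thesis
    unfolding Hdist_def interleaving_dist_def using assms(1) by (intro Inf_lower) auto
qed

text \<open>Truncated at 1 so that it is finite for unbounded functions.\<close>

definition uniform_dist :: "'a set \<Rightarrow> ('a \<Rightarrow> 'b::metric_space) \<Rightarrow> ('a \<Rightarrow> 'b) \<Rightarrow> real" where
  "uniform_dist X f g = (if X = {} then 0 else SUP x\<in>X. min 1 (dist (f x) (g x)))"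

lemma bdd_above_min_one: "bdd_above ((\<lambda>x. min 1 (h x :: real)) ` X)"
  by (rule bdd_aboveI[of _ 1]) auto

lemma uniform_dist_self [simp]: "uniform_dist X f f = 0"
  by (simp add: uniform_dist_def)

lemma uniform_dist_ge: "x \<in> X \<Longrightarrow> min 1 (dist (f x) (g x)) \<le> uniform_dist X f g"
  unfolding uniform_dist_def by (auto intro: cSUP_upper bdd_above_min_one)

lemma uniform_dist_le:
  assumes "0 \<le> c" and "\<And>x. x \<in> X \<Longrightarrow> min 1 (dist (f x) (g x)) \<le> c"
  shows "uniform_dist X f g \<le> c"
  using assms unfolding uniform_dist_def by (auto intro: cSUP_least)

lemma uniform_dist_nonneg: "0 \<le> uniform_dist X f g"
proof (cases "X = {}")
  case False
  then obtain x where "x \<in> X" by blast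
  have "0 \<le> min 1 (dist (f x) (g x))" by simp
  then show ?thesis using uniform_dist_ge[OF \<open>x \<in> X\<close>, of f g] by linarith
qed (simp add: uniform_dist_def)

lemma dist_le_uniform_dist:
  assumes "uniform_dist X f g < 1" and "x \<in> X"
  shows "dist (f x) (g x) \<le> uniform_dist X f g"
  using uniform_dist_ge[OF assms(2), of f g] assms(1) by (auto simp: min_def split: if_splits)

lemma uniform_dist_restrict [simp]:
  "uniform_dist X (restrict f X) (restrict g X) = uniform_dist X f g"
  unfolding uniform_dist_def by (auto intro!: SUP_cong)

lemma Metric_space_uniform_dist: "Metric_space (extensional X) (uniform_dist X)"
proof
  show "0 \<le> uniform_dist X f g" for f g :: "'a \<Rightarrow> 'b"
    by (rule uniform_dist_nonneg)
  show "uniform_dist X f g = uniform_dist X g f" for f g :: "'a \<Rightarrow> 'b"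
    by (simp add: uniform_dist_def dist_commute)
  show "uniform_dist X f g = 0 \<longleftrightarrow> f = g" if "f \<in> extensional X" "g \<in> extensional X" for f g :: "'a \<Rightarrow> 'b"
  proof
    assume "uniform_dist X f g = 0"
    then have "dist (f x) (g x) = 0" if "x \<in> X" for x
      using uniform_dist_ge[OF that, of f g] by (simp add: min_le_iff_disj)
    then show "f = g"
      using extensionalityI[OF that] by simp
  qed simp
  show "uniform_dist X f h \<le> uniform_dist X f g + uniform_dist X g h" for f g h :: "'a \<Rightarrow> 'b"
  proof (rule uniform_dist_le)
    show "0 \<le> uniform_dist X f g + uniform_dist X g h"
      by (simp add: uniform_dist_nonneg)
    fix x assume "x \<in> X"
    have "min 1 (dist (f x) (h x)) \<le> min 1 (dist (f x) (g x)) + min 1 (dist (g x) (h x))"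
    proof -
      have "min 1 a \<le> min 1 b + min 1 c" if "a \<le> b + c" "0 \<le> b" "0 \<le> c" for a b c :: real
        using that by (auto simp: min_def)
      then show ?thesis using dist_triangle[of "f x" "h x" "g x"] by simp
    qed
    also have "\<dots> \<le> uniform_dist X f g + uniform_dist X g h"
      using \<open>x \<in> X\<close> by (intro add_mono uniform_dist_ge)
    finally show "min 1 (dist (f x) (h x)) \<le> uniform_dist X f g + uniform_dist X g h" .
  qed
qed

lemma limitin_uniform_dist_if_uniform_limit:
  assumes "uniform_limit X fs g sequentially"
  shows "limitin (Metric_space.mtopology (extensional X) (uniform_dist X))
           (\<lambda>m. restrict (fs m) X) (restrict g X) sequentially"
proof -
  interpret Metric_space "extensional X" "uniform_dist X"
    by (rule Metric_space_uniform_dist)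
  show ?thesis
    unfolding limit_metric_sequentially
  proof (intro conjI allI impI)
    fix \<epsilon> :: real assume "0 < \<epsilon>"
    then obtain N where N: "\<forall>m\<ge>N. \<forall>x\<in>X. dist (fs m x) (g x) < \<epsilon> / 2"
      using assms unfolding uniform_limit_sequentially_iff by (meson half_gt_zero)
    have "uniform_dist X (fs m) g < \<epsilon>" if "m \<ge> N" for m
    proof -
      have "uniform_dist X (fs m) g \<le> \<epsilon> / 2"
      proof (rule uniform_dist_le)
        fix x assume "x \<in> X"
        then have "dist (fs m x) (g x) \<le> \<epsilon> / 2" using N that by fastforce
        then show "min 1 (dist (fs m x) (g x)) \<le> \<epsilon> / 2" by simp
      qed (use \<open>0 < \<epsilon>\<close> in simp)
      then show ?thesis using \<open>0 < \<epsilon>\<close> by linarith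
    qed
    then show "\<exists>N. \<forall>m\<ge>N. restrict (fs m) X \<in> extensional X
                 \<and> uniform_dist X (restrict (fs m) X) (restrict g X) < \<epsilon>"
      by auto
  qed simp
qed

definition uniformly_seq_compact :: "'a set \<Rightarrow> ('a \<Rightarrow> 'b::metric_space) set \<Rightarrow> bool" where
  "uniformly_seq_compact X A \<longleftrightarrow>
     (\<forall>fs :: nat \<Rightarrow> 'a \<Rightarrow> 'b. range fs \<subseteq> A \<longrightarrow>
        (\<exists>r g. strict_mono r \<and> g \<in> A \<and> uniform_limit X (fs \<circ> r) g sequentially))"

lemma compactin_restrict_uniform_dist:
  assumes "uniformly_seq_compact X A"
  shows "compactin (Metric_space.mtopology (extensional X) (uniform_dist X)) ((\<lambda>f. restrict f X) ` A)"
proof -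
  interpret Metric_space "extensional X" "uniform_dist X"
    by (rule Metric_space_uniform_dist)
  show ?thesis
    unfolding compactin_sequentially
  proof (intro conjI allI impI)
    fix \<sigma> :: "nat \<Rightarrow> 'a \<Rightarrow> 'b" assume "range \<sigma> \<subseteq> (\<lambda>f. restrict f X) ` A"
    then have "\<forall>m. \<exists>f. f \<in> A \<and> \<sigma> m = restrict f X" by blast
    then obtain fs where fs: "\<And>m. fs m \<in> A" "\<And>m. \<sigma> m = restrict (fs m) X" by metis
    then obtain r g where "strict_mono r" "g \<in> A" and lim: "uniform_limit X (fs \<circ> r) g sequentially"
      using assms unfolding uniformly_seq_compact_def by blast
    moreover have "\<sigma> \<circ> r = (\<lambda>m. restrict ((fs \<circ> r) m) X)"
      using fs(2) by auto
    ultimately have "strict_mono r \<and> limitin mtopology (\<sigma> \<circ> r) (restrict g X) sequentially"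
      using limitin_uniform_dist_if_uniform_limit[OF lim] by simp
    with \<open>g \<in> A\<close> show "\<exists>l r. l \<in> (\<lambda>f. restrict f X) ` A \<and> strict_mono r \<and> limitin mtopology (\<sigma> \<circ> r) l sequentially"
      by blast
  qed auto
qed

lemma equicontinuous_Lipschitz_family_comp:
  fixes \<psi> :: "'e::real_normed_vector \<Rightarrow> 'a::metric_space"
    and fs :: "nat \<Rightarrow> 'a \<Rightarrow> 'b::real_normed_vector"
  assumes "continuous_on K \<psi>" and "\<psi> ` K \<subseteq> X"
    and Lipschitz: "\<And>m x y. x \<in> X \<Longrightarrow> y \<in> X \<Longrightarrow> dist (fs m x) (fs m y) \<le> L * dist x y"
    and "x \<in> K" and "0 < e"
  shows "\<exists>\<delta>>0. \<forall>m y. y \<in> K \<and> norm (x - y) < \<delta> \<longrightarrow> norm (fs m (\<psi> x) - fs m (\<psi> y)) < e"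
proof -
  have "0 < e / (\<bar>L\<bar> + 1)"
    using \<open>0 < e\<close> by simp
  then obtain \<delta> where "\<delta> > 0"
    and \<delta>: "\<forall>y\<in>K. dist y x < \<delta> \<longrightarrow> dist (\<psi> y) (\<psi> x) < e / (\<bar>L\<bar> + 1)"
    using assms(1,4) unfolding continuous_on_iff by blast
  have "norm (fs m (\<psi> x) - fs m (\<psi> y)) < e" if "y \<in> K" "norm (x - y) < \<delta>" for m y
  proof -
    have "\<psi> x \<in> X" "\<psi> y \<in> X"
      using assms(2,4) \<open>y \<in> K\<close> by auto
    then have "norm (fs m (\<psi> x) - fs m (\<psi> y)) \<le> L * dist (\<psi> x) (\<psi> y)"
      using Lipschitz by (simp add: dist_norm)
    also have "\<dots> \<le> \<bar>L\<bar> * dist (\<psi> x) (\<psi> y)"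
      by (simp add: mult_right_mono)
    also have "\<dots> \<le> \<bar>L\<bar> * (e / (\<bar>L\<bar> + 1))"
      using \<delta> that by (intro mult_left_mono) (auto simp: dist_norm norm_minus_commute dist_commute less_imp_le)
    also have "\<dots> < e"
      using \<open>0 < e\<close> by (simp add: field_simps)
    finally show ?thesis .
  qed
  then show ?thesis using \<open>\<delta> > 0\<close> by blast
qed

lemma Lipschitz_family_uniformly_convergent_subseq:
  fixes fs :: "nat \<Rightarrow> 'a::metric_space \<Rightarrow> 'b::{real_normed_vector,heine_borel}"
    and K :: "'e::euclidean_space set"
  assumes "compact K" and "X homeomorphic K"
    and bounded: "\<And>m x. x \<in> X \<Longrightarrow> norm (fs m x) \<le> B"
    and Lipschitz: "\<And>m x y. x \<in> X \<Longrightarrow> y \<in> X \<Longrightarrow> dist (fs m x) (fs m y) \<le> L * dist x y"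
  obtains r g where "strict_mono r" and "uniform_limit X (fs \<circ> r) g sequentially"
proof -
  obtain \<phi> \<psi> where hom: "homeomorphism X K \<phi> \<psi>"
    using assms(2) unfolding homeomorphic_def by blast
  have \<psi>: "\<psi> ` K \<subseteq> X" "continuous_on K \<psi>"
    and \<phi>: "\<And>x. x \<in> X \<Longrightarrow> \<phi> x \<in> K \<and> \<psi> (\<phi> x) = x"
    using hom unfolding homeomorphism_def by auto
  obtain g r where "strict_mono (r :: nat \<Rightarrow> nat)"
    and lim: "\<And>e. 0 < e \<Longrightarrow> \<exists>N. \<forall>n y. n \<ge> N \<and> y \<in> K \<longrightarrow> norm (fs (r n) (\<psi> y) - g y) < e"
  proof (rule Arzela_Ascoli[OF assms(1), of "\<lambda>m. fs m \<circ> \<psi>" B])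
    show "\<And>m y. y \<in> K \<Longrightarrow> norm ((fs m \<circ> \<psi>) y) \<le> B"
      using bounded \<psi>(1) by auto
    show "\<And>x e. x \<in> K \<Longrightarrow> 0 < e \<Longrightarrow>
            \<exists>d>0. \<forall>n y. y \<in> K \<and> norm (x - y) < d \<longrightarrow> norm ((fs n \<circ> \<psi>) x - (fs n \<circ> \<psi>) y) < e"
      using equicontinuous_Lipschitz_family_comp[OF \<psi>(2,1) Lipschitz] by simp
  qed auto
  have "uniform_limit X (fs \<circ> r) (g \<circ> \<phi>) sequentially"
    unfolding uniform_limit_sequentially_iff
  proof (intro allI impI)
    fix e :: real assume "0 < e"
    then obtain N where N: "\<forall>n y. n \<ge> N \<and> y \<in> K \<longrightarrow> norm (fs (r n) (\<psi> y) - g y) < e"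
      using lim by blast
    have "dist ((fs \<circ> r) n x) ((g \<circ> \<phi>) x) < e" if "n \<ge> N" "x \<in> X" for n x
      using N[rule_format, of n "\<phi> x"] \<phi>[OF \<open>x \<in> X\<close>] \<open>n \<ge> N\<close> by (simp add: dist_norm)
    then show "\<exists>N. \<forall>n\<ge>N. \<forall>x\<in>X. dist ((fs \<circ> r) n x) ((g \<circ> \<phi>) x) < e"
      by blast
  qed
  with \<open>strict_mono r\<close> show ?thesis
    using that by blast
qed

lemma uniformly_seq_compact_if_Lipschitz_bounded_closed:
  fixes A :: "('a::metric_space \<Rightarrow> 'b::{real_normed_vector,heine_borel}) set"
    and K :: "'e::euclidean_space set"
  assumes "compact K" and "X homeomorphic K"
    and bounded: "\<And>f x. f \<in> A \<Longrightarrow> x \<in> X \<Longrightarrow> norm (f x) \<le> B"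
    and Lipschitz: "\<And>f x y. f \<in> A \<Longrightarrow> x \<in> X \<Longrightarrow> y \<in> X \<Longrightarrow> dist (f x) (f y) \<le> L * dist x y"
    and closed: "\<And>fs g. range fs \<subseteq> A \<Longrightarrow> uniform_limit X fs g sequentially \<Longrightarrow> \<exists>h\<in>A. \<forall>x\<in>X. h x = g x"
  shows "uniformly_seq_compact X A"
  unfolding uniformly_seq_compact_def
proof (intro allI impI)
  fix fs :: "nat \<Rightarrow> 'a \<Rightarrow> 'b" assume fs: "range fs \<subseteq> A"
  obtain r g where "strict_mono r" and lim: "uniform_limit X (fs \<circ> r) g sequentially"
    using Lipschitz_family_uniformly_convergent_subseq[OF assms(1,2)]
      bounded[OF range_subsetD[OF fs]] Lipschitz[OF range_subsetD[OF fs]] by metis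
  moreover have "range (fs \<circ> r) \<subseteq> A"
    using fs by auto
  ultimately obtain h where "h \<in> A" "\<forall>x\<in>X. h x = g x"
    using closed by blast
  then show "\<exists>r h. strict_mono r \<and> h \<in> A \<and> uniform_limit X (fs \<circ> r) h sequentially"
    using \<open>strict_mono r\<close> lim uniform_limit_cong'[of X "fs \<circ> r" "fs \<circ> r" g h] by auto
qed

text \<open>No triangle inequality for \<open>\<rho>\<close> is needed: every \<open>\<rho>\<close>-ball only has to contain the
preimage under \<open>R\<close> of a \<open>T\<close>-open neighbourhood of its centre.\<close>

lemma pcompact_if_compactin_image:
  assumes "compactin T (R ` A)"
    and "\<And>f e. f \<in> A \<Longrightarrow> 0 < e \<Longrightarrow>
           \<exists>V. openin T V \<and> R f \<in> V \<and> (\<forall>g\<in>A. R g \<in> V \<longrightarrow> \<rho> f g < ereal e)"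
  shows "pcompact \<rho> A"
  unfolding pcompact_def
proof (intro allI impI)
  fix \<U> assume \<U>: "(\<forall>U\<in>\<U>. popen \<rho> U) \<and> A \<subseteq> \<Union>\<U>"
  have "\<exists>U V. U \<in> \<U> \<and> openin T V \<and> R f \<in> V \<and> (\<forall>g\<in>A. R g \<in> V \<longrightarrow> g \<in> U)" if f: "f \<in> A" for f
  proof -
    obtain U where "U \<in> \<U>" "f \<in> U" using \<U> f by blast
    then obtain e where "0 < e" "\<forall>g. \<rho> f g < ereal e \<longrightarrow> g \<in> U"
      using \<U> unfolding popen_def by blast
    then show ?thesis using assms(2)[OF f \<open>0 < e\<close>] \<open>U \<in> \<U>\<close> by blast
  qed
  then obtain U V where UV: "\<And>f. f \<in> A \<Longrightarrow>
      U f \<in> \<U> \<and> openin T (V f) \<and> R f \<in> V f \<and> (\<forall>g\<in>A. R g \<in> V f \<longrightarrow> g \<in> U f)"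
    by (metis (no_types, lifting))
  then have "R ` A \<subseteq> \<Union>(V ` A)" and "\<forall>W\<in>V ` A. openin T W" by auto
  then obtain \<W> where "finite \<W>" "\<W> \<subseteq> V ` A" "R ` A \<subseteq> \<Union>\<W>"
    using assms(1) unfolding compactin_def by meson
  then obtain F where F: "finite F" "F \<subseteq> A" "R ` A \<subseteq> \<Union>(V ` F)"
    by (metis finite_subset_image)
  have "A \<subseteq> \<Union>(U ` F)"
  proof
    fix f assume "f \<in> A"
    then obtain h where "h \<in> F" "R f \<in> V h" using F(3) by blast
    then show "f \<in> \<Union>(U ` F)" using UV \<open>f \<in> A\<close> F(2) by blast
  qed
  moreover have "U ` F \<subseteq> \<U>" using F(2) UV by blast
  ultimately show "\<exists>\<V>\<subseteq>\<U>. finite \<V> \<and> A \<subseteq> \<Union>\<V>"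
    using F(1) by blast
qed

lemma Hdist_le_uniform_dist:
  assumes "uniform_dist X f g < 1"
  shows "Hdist K k X f g \<le> ereal (uniform_dist X f g)"
proof (rule Hdist_le_componentwise[OF uniform_dist_nonneg], intro ballI allI)
  fix x i assume "x \<in> X"
  have "\<bar>f x $ i - g x $ i\<bar> \<le> dist (f x) (g x)"
    using component_le_norm_cart[of "f x - g x" i] by (simp add: dist_norm)
  also have "\<dots> \<le> uniform_dist X f g"
    by (rule dist_le_uniform_dist[OF assms \<open>x \<in> X\<close>])
  finally show "\<bar>f x $ i - g x $ i\<bar> \<le> uniform_dist X f g" .
qed

lemma pcompact_Hdist_if_uniformly_seq_compact:
  fixes A :: "('a::topological_space \<Rightarrow> real^'n::finite) set"
  assumes "uniformly_seq_compact X A"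
  shows "pcompact (Hdist K k X) A"
proof (rule pcompact_if_compactin_image[OF compactin_restrict_uniform_dist[OF assms]])
  interpret Metric_space "extensional X" "uniform_dist X"
    by (rule Metric_space_uniform_dist)
  fix f and e :: real assume "f \<in> A" "0 < e"
  show "\<exists>V. openin mtopology V \<and> restrict f X \<in> V \<and>
          (\<forall>g\<in>A. restrict g X \<in> V \<longrightarrow> Hdist K k X f g < ereal e)"
  proof (intro exI conjI ballI impI)
    show "restrict f X \<in> mball (restrict f X) (min 1 e)"
      using \<open>0 < e\<close> by simp
    fix g assume "restrict g X \<in> mball (restrict f X) (min 1 e)"
    then have "uniform_dist X f g < min 1 e" by simp
    then show "Hdist K k X f g < ereal e"
      using Hdist_le_uniform_dist[of X f g K k] by (simp add: le_less_trans)
  qed simp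
qed

lemma norm_le_card_if_in_unit_cube:
  fixes v :: "real^'n::finite"
  assumes "\<forall>i. 0 \<le> v $ i \<and> v $ i \<le> 1"
  shows "norm v \<le> CARD('n)"
proof -
  have "norm v \<le> (\<Sum>i\<in>UNIV. \<bar>v $ i\<bar>)"
    by (rule norm_le_l1_cart)
  also have "\<dots> \<le> (\<Sum>i\<in>(UNIV::'n set). 1)"
    using assms by (intro sum_mono) simp
  finally show ?thesis by simp
qed

theorem proposition5p3:
  fixes X :: "'a::metric_space set"
    and \<T> :: "'e::euclidean_space set set"
    and A :: "('a \<Rightarrow> real^'n::finite) set"
    and k :: nat
  assumes triang: "simplicial_complex \<T>" "X homeomorphic \<Union>\<T>"
    and cont: "\<forall>f\<in>A. continuous_on X f \<and> (\<forall>x\<in>X. \<forall>i. 0 \<le> f x $ i \<and> f x $ i \<le> 1)"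
    and lip: "\<exists>L. \<forall>f\<in>A. \<forall>x\<in>X. \<forall>y\<in>X. dist (f x) (f y) \<le> L * dist x y"
    and closed: "\<forall>fs g. (\<forall>m. fs m \<in> A) \<and> uniform_limit X fs g sequentially
                   \<longrightarrow> (\<exists>h\<in>A. \<forall>x\<in>X. h x = g x)"
  shows "pcompact (Hdist TYPE('k::field) k X) A"
proof -
  obtain L where L: "\<forall>f\<in>A. \<forall>x\<in>X. \<forall>y\<in>X. dist (f x) (f y) \<le> L * dist x y"
    using lip by blast
  have "compact (\<Union>\<T>)"
    using triang(1) unfolding simplicial_complex_def by (metis compact_Union compact_simplex)
  have "uniformly_seq_compact X A"
  proof (rule uniformly_seq_compact_if_Lipschitz_bounded_closed[OF \<open>compact (\<Union>\<T>)\<close> triang(2)])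
    show "norm (f x) \<le> real CARD('n)" if "f \<in> A" "x \<in> X" for f x
      using norm_le_card_if_in_unit_cube cont that by blast
    show "dist (f x) (f y) \<le> L * dist x y" if "f \<in> A" "x \<in> X" "y \<in> X" for f x y
      using L that by blast
    show "\<exists>h\<in>A. \<forall>x\<in>X. h x = g x" if "range fs \<subseteq> A" "uniform_limit X fs g sequentially" for fs g
      using closed that by blast
  qed
  then show ?thesis
    by (rule pcompact_Hdist_if_uniformly_seq_compact)
qed

end
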